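(* Neither $\mathsf{Slice}$ nor $\mathsf{Space}$ is a monoidal category under a monoidal product given on objects by $X\otimes Y:=X\cap Y$ and on morphisms by $S\otimes T:=S\cap T$.
   Context: Fix a connected, time-orientable Lorentzian manifold $\mathcal{M}$ with a fixed time-orientation (no further causality assumptions). A causal curve is an equivalence class, up to monotone reparametrisation, of smooth regular paths $\mu:\iota\to\mathcal{M}$ ($\iota\subseteq\mathbb{R}$ an interval) whose tangent is everywhere timelike or null; it is future-directed if the tangent is everywhere future-directed. Write $x\prec y$ if $x=y$ or there is a future-directed causal curve from $x$ to $y$. A region is any subset of $\mathcal{M}$; a region $A$ is spacelike if no two distinct points $x,y\in A$ satisfy $x\prec y$. A slice is a closed spacelike subset of $\mathcal{M}$. For regions $A,B$, $\mathcal{C}[A,B]$ is the set of future-directed causal curves passing through $A$ and then $B$: for a representative path $\mu:\iota\to\mathcal{M}$, there exists $q\in\iota$ with $\mu(q)\in B$, and for every such $q$ there exists $p\le q$ with $\mu(p)\in A$. The category $\mathsf{Slice}$ has slices as objects, $\mathsf{Slice}(X,Y)=\mathcal{P}(\mathcal{C}[X,Y])$ (the powerset), composition $T\circ S:=T\cap S$, identities $1_X=\mathcal{C}[X,X]$. The category $\mathsf{Space}$ is defined identically but with arbitrary regions as objects. *)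

theory Defs
  imports "HOL-Analysis.Analysis"
begin

text \<open>C^k on a set S, using derivatives within S (so that closed intervals are
allowed as domains of paths); C^(k+1) means differentiable with C^k partial
derivatives (directional derivatives along the standard basis).\<close>

fun Ck :: "nat \<Rightarrow> 'a::euclidean_space set \<Rightarrow> ('a \<Rightarrow> 'b::euclidean_space) \<Rightarrow> bool" where
  "Ck 0 S f = continuous_on S f"
| "Ck (Suc k) S f =
     ((\<forall>x\<in>S. f differentiable (at x within S)) \<and>
      (\<forall>i\<in>Basis. Ck k S (\<lambda>x. frechet_derivative f (at x within S) i)))"

definition smooth_on :: "'a::euclidean_space set \<Rightarrow> ('a \<Rightarrow> 'b::euclidean_space) \<Rightarrow> bool" where
  "smooth_on S f \<longleftrightarrow> (\<forall>k. Ck k S f)"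

text \<open>The manifold is the whole of a Hausdorff, second countable topological type 'p;
it carries a smooth atlas of charts (U, phi) with values in real^'n.  The metric is
given by its component matrix G phi x in each chart (phi, U) at each x in U, the
time orientation by the components Tf phi x of a continuous timelike vector field.\<close>

type_synonym ('p, 'n) chart = "'p set \<times> ('p \<Rightarrow> real^'n)"

definition bil :: "real^'n^'n \<Rightarrow> real^'n \<Rightarrow> real^'n \<Rightarrow> real" where
  "bil A v w = v \<bullet> (A *v w)"

definition lorentz_signature :: "real^'n^'n \<Rightarrow> bool" where
  "lorentz_signature A \<longleftrightarrow> transpose A = A \<and>
     (\<exists>(P::real^'n^'n) (i0::'n). invertible P \<and>
        transpose P ** A ** P = (\<chi> i j. if i = j then (if i = i0 then -1 else 1) else 0))"

definition transition :: "('p, 'n) chart \<Rightarrow> ('p, 'n) chart \<Rightarrow> real^'n \<Rightarrow> real^'n" where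
  "transition c d = snd d \<circ> inv_into (fst c) (snd c)"

definition smooth_atlas :: "('p::topological_space, 'n::finite) chart set \<Rightarrow> bool" where
  "smooth_atlas A \<longleftrightarrow>
     (\<Union>c\<in>A. fst c) = UNIV \<and>
     (\<forall>(U, \<phi>)\<in>A. open U \<and> open (\<phi> ` U) \<and> homeomorphism U (\<phi> ` U) \<phi> (inv_into U \<phi>)) \<and>
     (\<forall>c\<in>A. \<forall>d\<in>A. smooth_on (snd c ` (fst c \<inter> fst d)) (transition c d))"

definition lorentzian_manifold ::
  "('p::{t2_space, second_countable_topology}, 'n::finite) chart set \<Rightarrow>
   (('p \<Rightarrow> real^'n) \<Rightarrow> 'p \<Rightarrow> real^'n^'n) \<Rightarrow> (('p \<Rightarrow> real^'n) \<Rightarrow> 'p \<Rightarrow> real^'n) \<Rightarrow> bool" where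
  "lorentzian_manifold A G Tf \<longleftrightarrow>
     connected (UNIV :: 'p set) \<and> smooth_atlas A \<and>
     (\<forall>(U, \<phi>)\<in>A.
        smooth_on (\<phi> ` U) (\<lambda>y. G \<phi> (inv_into U \<phi> y)) \<and>
        continuous_on (\<phi> ` U) (\<lambda>y. Tf \<phi> (inv_into U \<phi> y)) \<and>
        (\<forall>x\<in>U. lorentz_signature (G \<phi> x) \<and> bil (G \<phi> x) (Tf \<phi> x) (Tf \<phi> x) < 0)) \<and>
     (\<forall>c\<in>A. \<forall>d\<in>A. \<forall>x\<in>fst c \<inter> fst d.
        (let J = frechet_derivative (transition c d) (at (snd c x)) in
          (\<forall>v w. bil (G (snd c) x) v w = bil (G (snd d) x) (J v) (J w)) \<and>
          Tf (snd d) x = J (Tf (snd c) x)))"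

text \<open>A smooth regular future-directed causal path mu on an interval I (with more than
one point): near every parameter t, in some chart of the atlas, the coordinate expression
is smooth, and its velocity v is nonzero, causal (g(v,v) \<le> 0) and future-directed
(g(v,T) < 0 for the time-orientation field T).\<close>

definition fdc_path ::
  "('p::topological_space, 'n::finite) chart set \<Rightarrow>
   (('p \<Rightarrow> real^'n) \<Rightarrow> 'p \<Rightarrow> real^'n^'n) \<Rightarrow> (('p \<Rightarrow> real^'n) \<Rightarrow> 'p \<Rightarrow> real^'n) \<Rightarrow>
   real set \<Rightarrow> (real \<Rightarrow> 'p) \<Rightarrow> bool" where
  "fdc_path A G Tf I \<mu> \<longleftrightarrow>
     is_interval I \<and> (\<exists>a\<in>I. \<exists>b\<in>I. a < b) \<and>
     (\<forall>t\<in>I. \<exists>(U, \<phi>)\<in>A. \<exists>e>0.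
        \<mu> ` (I \<inter> {t - e<..<t + e}) \<subseteq> U \<and>
        smooth_on (I \<inter> {t - e<..<t + e}) (\<phi> \<circ> \<mu>) \<and>
        (let v = vector_derivative (\<phi> \<circ> \<mu>) (at t within I) in
           v \<noteq> 0 \<and> bil (G \<phi> (\<mu> t)) v v \<le> 0 \<and> bil (G \<phi> (\<mu> t)) v (Tf \<phi> (\<mu> t)) < 0))"

definition reparam :: "real set \<Rightarrow> (real \<Rightarrow> 'p) \<Rightarrow> real set \<Rightarrow> (real \<Rightarrow> 'p) \<Rightarrow> bool" where
  "reparam I \<mu> K \<nu> \<longleftrightarrow> is_interval K \<and>
     (\<exists>h. bij_betw h K I \<and> smooth_on K h \<and>
          (\<forall>s\<in>K. \<exists>d>0. (h has_real_derivative d) (at s within K)) \<and>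
          (\<forall>s\<in>K. \<nu> s = \<mu> (h s)))"

text \<open>Future-directed causal curves: equivalence classes of such paths.\<close>

definition fdc_curves ::
  "('p::topological_space, 'n::finite) chart set \<Rightarrow>
   (('p \<Rightarrow> real^'n) \<Rightarrow> 'p \<Rightarrow> real^'n^'n) \<Rightarrow> (('p \<Rightarrow> real^'n) \<Rightarrow> 'p \<Rightarrow> real^'n) \<Rightarrow>
   (real set \<times> (real \<Rightarrow> 'p)) set set" where
  "fdc_curves A G Tf =
     {c. \<exists>I \<mu>. fdc_path A G Tf I \<mu> \<and> c = {(K, \<nu>). reparam I \<mu> K \<nu>}}"

definition causal_prec ::
  "('p::topological_space, 'n::finite) chart set \<Rightarrow>
   (('p \<Rightarrow> real^'n) \<Rightarrow> 'p \<Rightarrow> real^'n^'n) \<Rightarrow> (('p \<Rightarrow> real^'n) \<Rightarrow> 'p \<Rightarrow> real^'n) \<Rightarrow>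
   'p \<Rightarrow> 'p \<Rightarrow> bool" where
  "causal_prec A G Tf x y \<longleftrightarrow> x = y \<or>
     (\<exists>I \<mu> a b. fdc_path A G Tf I \<mu> \<and> a \<in> I \<and> b \<in> I \<and> a \<le> b \<and> \<mu> a = x \<and> \<mu> b = y)"

definition spacelike ::
  "('p::topological_space, 'n::finite) chart set \<Rightarrow>
   (('p \<Rightarrow> real^'n) \<Rightarrow> 'p \<Rightarrow> real^'n^'n) \<Rightarrow> (('p \<Rightarrow> real^'n) \<Rightarrow> 'p \<Rightarrow> real^'n) \<Rightarrow>
   'p set \<Rightarrow> bool" where
  "spacelike A G Tf R \<longleftrightarrow> (\<forall>x\<in>R. \<forall>y\<in>R. x \<noteq> y \<longrightarrow> \<not> causal_prec A G Tf x y)"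

definition is_slice ::
  "('p::topological_space, 'n::finite) chart set \<Rightarrow>
   (('p \<Rightarrow> real^'n) \<Rightarrow> 'p \<Rightarrow> real^'n^'n) \<Rightarrow> (('p \<Rightarrow> real^'n) \<Rightarrow> 'p \<Rightarrow> real^'n) \<Rightarrow>
   'p set \<Rightarrow> bool" where
  "is_slice A G Tf R \<longleftrightarrow> closed R \<and> spacelike A G Tf R"

text \<open>C[X,Y]: future-directed causal curves passing through X and then Y.\<close>

definition curves_through ::
  "('p::topological_space, 'n::finite) chart set \<Rightarrow>
   (('p \<Rightarrow> real^'n) \<Rightarrow> 'p \<Rightarrow> real^'n^'n) \<Rightarrow> (('p \<Rightarrow> real^'n) \<Rightarrow> 'p \<Rightarrow> real^'n) \<Rightarrow>
   'p set \<Rightarrow> 'p set \<Rightarrow> (real set \<times> (real \<Rightarrow> 'p)) set set" where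
  "curves_through A G Tf X Y =
     {c \<in> fdc_curves A G Tf. \<exists>(I, \<mu>)\<in>c.
        (\<exists>q\<in>I. \<mu> q \<in> Y) \<and> (\<forall>q\<in>I. \<mu> q \<in> Y \<longrightarrow> (\<exists>p\<in>I. p \<le> q \<and> \<mu> p \<in> X))}"

text \<open>A category is given by a set of objects Ob, hom-sets Hom X Y, composition
cmp g f (g after f) and identities ident X.\<close>

definition category :: "'o set \<Rightarrow> ('o \<Rightarrow> 'o \<Rightarrow> 'm set) \<Rightarrow> ('m \<Rightarrow> 'm \<Rightarrow> 'm) \<Rightarrow> ('o \<Rightarrow> 'm) \<Rightarrow> bool" where
  "category Ob Hom cmp ident \<longleftrightarrow>
     (\<forall>X\<in>Ob. ident X \<in> Hom X X) \<and>
     (\<forall>X\<in>Ob. \<forall>Y\<in>Ob. \<forall>Z\<in>Ob. \<forall>f\<in>Hom X Y. \<forall>g\<in>Hom Y Z. cmp g f \<in> Hom X Z) \<and>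
     (\<forall>X\<in>Ob. \<forall>Y\<in>Ob. \<forall>f\<in>Hom X Y. cmp f (ident X) = f \<and> cmp (ident Y) f = f) \<and>
     (\<forall>W\<in>Ob. \<forall>X\<in>Ob. \<forall>Y\<in>Ob. \<forall>Z\<in>Ob. \<forall>f\<in>Hom W X. \<forall>g\<in>Hom X Y. \<forall>h\<in>Hom Y Z.
        cmp h (cmp g f) = cmp (cmp h g) f)"

definition is_iso :: "('o \<Rightarrow> 'o \<Rightarrow> 'm set) \<Rightarrow> ('m \<Rightarrow> 'm \<Rightarrow> 'm) \<Rightarrow> ('o \<Rightarrow> 'm) \<Rightarrow> 'o \<Rightarrow> 'o \<Rightarrow> 'm \<Rightarrow> bool" where
  "is_iso Hom cmp ident X Y f \<longleftrightarrow>
     f \<in> Hom X Y \<and> (\<exists>g\<in>Hom Y X. cmp g f = ident X \<and> cmp f g = ident Y)"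

definition monoidal_category ::
  "'o set \<Rightarrow> ('o \<Rightarrow> 'o \<Rightarrow> 'm set) \<Rightarrow> ('m \<Rightarrow> 'm \<Rightarrow> 'm) \<Rightarrow> ('o \<Rightarrow> 'm) \<Rightarrow>
   ('o \<Rightarrow> 'o \<Rightarrow> 'o) \<Rightarrow> ('m \<Rightarrow> 'm \<Rightarrow> 'm) \<Rightarrow> 'o \<Rightarrow>
   ('o \<Rightarrow> 'o \<Rightarrow> 'o \<Rightarrow> 'm) \<Rightarrow> ('o \<Rightarrow> 'm) \<Rightarrow> ('o \<Rightarrow> 'm) \<Rightarrow> bool" where
  "monoidal_category Ob Hom cmp ident tO tM I a l r \<longleftrightarrow>
     category Ob Hom cmp ident \<and>
     \<comment> \<open>tensor is a bifunctor\<close>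
     (\<forall>X\<in>Ob. \<forall>Y\<in>Ob. tO X Y \<in> Ob) \<and>
     (\<forall>X\<in>Ob. \<forall>Y\<in>Ob. \<forall>X'\<in>Ob. \<forall>Y'\<in>Ob. \<forall>f\<in>Hom X Y. \<forall>g\<in>Hom X' Y'.
        tM f g \<in> Hom (tO X X') (tO Y Y')) \<and>
     (\<forall>X\<in>Ob. \<forall>Y\<in>Ob. tM (ident X) (ident Y) = ident (tO X Y)) \<and>
     (\<forall>X\<in>Ob. \<forall>Y\<in>Ob. \<forall>Z\<in>Ob. \<forall>X'\<in>Ob. \<forall>Y'\<in>Ob. \<forall>Z'\<in>Ob.
        \<forall>f\<in>Hom X Y. \<forall>g\<in>Hom Y Z. \<forall>f'\<in>Hom X' Y'. \<forall>g'\<in>Hom Y' Z'.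
        tM (cmp g f) (cmp g' f') = cmp (tM g g') (tM f f')) \<and>
     \<comment> \<open>unit and structural isomorphisms\<close>
     I \<in> Ob \<and>
     (\<forall>X\<in>Ob. \<forall>Y\<in>Ob. \<forall>Z\<in>Ob. is_iso Hom cmp ident (tO (tO X Y) Z) (tO X (tO Y Z)) (a X Y Z)) \<and>
     (\<forall>X\<in>Ob. is_iso Hom cmp ident (tO I X) X (l X)) \<and>
     (\<forall>X\<in>Ob. is_iso Hom cmp ident (tO X I) X (r X)) \<and>
     \<comment> \<open>naturality\<close>
     (\<forall>X\<in>Ob. \<forall>Y\<in>Ob. \<forall>Z\<in>Ob. \<forall>X'\<in>Ob. \<forall>Y'\<in>Ob. \<forall>Z'\<in>Ob.
        \<forall>f\<in>Hom X X'. \<forall>g\<in>Hom Y Y'. \<forall>h\<in>Hom Z Z'.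
        cmp (a X' Y' Z') (tM (tM f g) h) = cmp (tM f (tM g h)) (a X Y Z)) \<and>
     (\<forall>X\<in>Ob. \<forall>Y\<in>Ob. \<forall>f\<in>Hom X Y. cmp (l Y) (tM (ident I) f) = cmp f (l X)) \<and>
     (\<forall>X\<in>Ob. \<forall>Y\<in>Ob. \<forall>f\<in>Hom X Y. cmp (r Y) (tM f (ident I)) = cmp f (r X)) \<and>
     \<comment> \<open>pentagon and triangle\<close>
     (\<forall>W\<in>Ob. \<forall>X\<in>Ob. \<forall>Y\<in>Ob. \<forall>Z\<in>Ob.
        cmp (tM (ident W) (a X Y Z)) (cmp (a W (tO X Y) Z) (tM (a W X Y) (ident Z)))
        = cmp (a W X (tO Y Z)) (a (tO W X) Y Z)) \<and>
     (\<forall>X\<in>Ob. \<forall>Y\<in>Ob.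
        cmp (tM (ident X) (l Y)) (a X I Y) = tM (r X) (ident Y))"

definition cHom ::
  "('p::topological_space, 'n::finite) chart set \<Rightarrow>
   (('p \<Rightarrow> real^'n) \<Rightarrow> 'p \<Rightarrow> real^'n^'n) \<Rightarrow> (('p \<Rightarrow> real^'n) \<Rightarrow> 'p \<Rightarrow> real^'n) \<Rightarrow>
   'p set \<Rightarrow> 'p set \<Rightarrow> (real set \<times> (real \<Rightarrow> 'p)) set set set" where
  "cHom A G Tf X Y = Pow (curves_through A G Tf X Y)"

definition cComp :: "'c set \<Rightarrow> 'c set \<Rightarrow> 'c set" where
  "cComp T S = T \<inter> S"

definition cId ::
  "('p::topological_space, 'n::finite) chart set \<Rightarrow>
   (('p \<Rightarrow> real^'n) \<Rightarrow> 'p \<Rightarrow> real^'n^'n) \<Rightarrow> (('p \<Rightarrow> real^'n) \<Rightarrow> 'p \<Rightarrow> real^'n) \<Rightarrow>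
   'p set \<Rightarrow> (real set \<times> (real \<Rightarrow> 'p)) set set" where
  "cId A G Tf X = curves_through A G Tf X X"

definition slice_objects ::
  "('p::topological_space, 'n::finite) chart set \<Rightarrow>
   (('p \<Rightarrow> real^'n) \<Rightarrow> 'p \<Rightarrow> real^'n^'n) \<Rightarrow> (('p \<Rightarrow> real^'n) \<Rightarrow> 'p \<Rightarrow> real^'n) \<Rightarrow> 'p set set" where
  "slice_objects A G Tf = {X. is_slice A G Tf X}"

end

theory Submission
  imports Defs
begin

text \<open>If the intersection were a monoidal product, functoriality would give
  \<open>C[X,X] \<inter> C[Y,Y] = C[X \<inter> Y, X \<inter> Y]\<close> for all objects.  Singletons are slices, and a
  causal curve through two distinct points \<open>x\<close>, \<open>y\<close> lies in \<open>C[{x},{x}] \<inter> C[{y},{y}]\<close>,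
  whereas \<open>C[\<emptyset>,\<emptyset>]\<close> is empty.  Such a curve exists on every Lorentzian manifold: in a
  chart, follow the coordinate line in the direction of the time orientation field.\<close>

lemma monoidal_category_tensor_ident:
  assumes "monoidal_category Ob Hom cmp ident tO tM I a l r" "X \<in> Ob" "Y \<in> Ob"
  shows "tM (ident X) (ident Y) = ident (tO X Y)"
proof -
  have "\<forall>X\<in>Ob. \<forall>Y\<in>Ob. tM (ident X) (ident Y) = ident (tO X Y)"
    using assms(1) unfolding monoidal_category_def by (elim conjE)
  then show ?thesis
    using assms(2,3) by blast
qed

lemma Ck_cong: "(\<And>x. x \<in> S \<Longrightarrow> f x = g x) \<Longrightarrow> Ck k S f = Ck k S g"
proof (induction k arbitrary: f g)
  case 0
  then show ?case using continuous_on_cong[OF refl] by simp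
next
  case (Suc k)
  have has_deriv: "(f has_derivative D) (at x within S) \<longleftrightarrow> (g has_derivative D) (at x within S)"
    if "x \<in> S" for x D
    using that Suc.prems has_derivative_transform_within[of _ _ x S 1] by (metis zero_less_one)
  then have "f differentiable (at x within S) \<longleftrightarrow> g differentiable (at x within S)"
    if "x \<in> S" for x
    using that unfolding differentiable_def by simp
  moreover have "Ck k S (\<lambda>x. frechet_derivative f (at x within S) i)
      = Ck k S (\<lambda>x. frechet_derivative g (at x within S) i)" for i
    by (rule Suc.IH) (simp add: frechet_derivative_def has_deriv)
  ultimately show ?case by auto
qed

lemma Ck_const: "open S \<Longrightarrow> Ck k S (\<lambda>_. c)"
proof (induction k arbitrary: c)
  case 0
  then show ?case by simp
next
  case (Suc k)
  have "frechet_derivative (\<lambda>_. c) (at x within S) = (\<lambda>_. 0)" if "x \<in> S" for x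
    using at_within_open[OF that Suc.prems] frechet_derivative_at[OF has_derivative_const] by simp
  then have "Ck k S (\<lambda>x. frechet_derivative (\<lambda>_. c) (at x within S) i)" for i
    using Ck_cong[of S "\<lambda>x. frechet_derivative (\<lambda>_. c) (at x within S) i" "\<lambda>_. 0"] Suc.IH Suc.prems
    by simp
  then show ?case by simp
qed

lemma Ck_affine:
  fixes p v :: "'b::euclidean_space"
  assumes "open S"
  shows "Ck k S (\<lambda>s::real. p + s *\<^sub>R v)"
proof (cases k)
  case 0
  then show ?thesis by simp (intro continuous_intros)
next
  case (Suc k')
  have deriv: "((\<lambda>s::real. p + s *\<^sub>R v) has_derivative (\<lambda>h. h *\<^sub>R v)) (at x)" for x
    by (auto intro!: derivative_eq_intros)
  then have "frechet_derivative (\<lambda>s. p + s *\<^sub>R v) (at x within S) = (\<lambda>h. h *\<^sub>R v)" if "x \<in> S" for x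
    using at_within_open[OF that assms] frechet_derivative_at[OF deriv] by simp
  then have "Ck k' S (\<lambda>x. frechet_derivative (\<lambda>s. p + s *\<^sub>R v) (at x within S) i)" for i
    using Ck_cong[of S "\<lambda>x. frechet_derivative (\<lambda>s. p + s *\<^sub>R v) (at x within S) i" "\<lambda>_. i *\<^sub>R v"]
      Ck_const[OF assms]
    by simp
  moreover have "(\<lambda>s. p + s *\<^sub>R v) differentiable (at x within S)" for x
    using deriv by (meson differentiable_at_withinI differentiable_def)
  ultimately show ?thesis using Suc by simp
qed

lemma smooth_on_affine:
  fixes p v :: "'b::euclidean_space"
  assumes "open S" "\<And>s. s \<in> S \<Longrightarrow> f s = p + s *\<^sub>R v"
  shows "smooth_on S f"
  unfolding smooth_on_def using Ck_cong[of S f "\<lambda>s. p + s *\<^sub>R v"] assms Ck_affine by metis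

lemma continuous_on_bil [continuous_intros]:
  assumes "continuous_on S M" "continuous_on S v" "continuous_on S w"
  shows "continuous_on S (\<lambda>y. bil (M y) (v y) (w y))"
  unfolding bil_def inner_vec_def matrix_vector_mult_def
  by (intro continuous_intros continuous_on_component assms)

lemma fdc_path_coordinate_line:
  assumes chart: "(U, \<phi>) \<in> A" and "\<alpha> < \<beta>" and "v \<noteq> 0"
    and line: "\<And>t. t \<in> {\<alpha><..<\<beta>} \<Longrightarrow> p + t *\<^sub>R v \<in> \<phi> ` U"
    and causal: "\<And>t. t \<in> {\<alpha><..<\<beta>} \<Longrightarrow>
      bil (G \<phi> (inv_into U \<phi> (p + t *\<^sub>R v))) v v \<le> 0 \<and>
      bil (G \<phi> (inv_into U \<phi> (p + t *\<^sub>R v))) v (Tf \<phi> (inv_into U \<phi> (p + t *\<^sub>R v))) < 0"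
  shows "fdc_path A G Tf {\<alpha><..<\<beta>} (\<lambda>t. inv_into U \<phi> (p + t *\<^sub>R v))"
    (is "fdc_path A G Tf ?I ?\<mu>")
proof -
  have coords: "\<phi> (?\<mu> t) = p + t *\<^sub>R v" if "t \<in> ?I" for t
    using line[OF that] by (simp add: f_inv_into_f)
  have "?\<mu> ` ?I \<subseteq> U"
    using line by (auto intro: inv_into_into)
  moreover have "smooth_on (?I \<inter> {t - 1<..<t + 1}) (\<phi> \<circ> ?\<mu>)" for t
    by (rule smooth_on_affine[of _ _ p v]) (use coords in auto)
  moreover have "vector_derivative (\<phi> \<circ> ?\<mu>) (at t within ?I) = v" if "t \<in> ?I" for t
  proof -
    have "((\<lambda>s. p + s *\<^sub>R v) has_vector_derivative v) (at t)"
      by (auto intro!: derivative_eq_intros)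
    then have "((\<phi> \<circ> ?\<mu>) has_vector_derivative v) (at t)"
      by (rule has_vector_derivative_transform_within_open[OF _ _ that]) (simp_all add: coords)
    then show ?thesis
      using at_within_open[OF that] vector_derivative_at by fastforce
  qed
  ultimately have local_chart: "\<exists>e>0. ?\<mu> ` (?I \<inter> {t - e<..<t + e}) \<subseteq> U \<and>
      smooth_on (?I \<inter> {t - e<..<t + e}) (\<phi> \<circ> ?\<mu>) \<and>
      (let w = vector_derivative (\<phi> \<circ> ?\<mu>) (at t within ?I) in
        w \<noteq> 0 \<and> bil (G \<phi> (?\<mu> t)) w w \<le> 0 \<and> bil (G \<phi> (?\<mu> t)) w (Tf \<phi> (?\<mu> t)) < 0)"
    if "t \<in> ?I" for t
    using that causal[OF that] \<open>v \<noteq> 0\<close> by (intro exI[of _ 1]) auto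
  have nontrivial: "\<exists>a\<in>?I. \<exists>b\<in>?I. a < b"
    using \<open>\<alpha> < \<beta>\<close> by (intro bexI[of _ "(2 * \<alpha> + \<beta>) / 3"] bexI[of _ "(\<alpha> + 2 * \<beta>) / 3"]) auto
  show ?thesis
    unfolding fdc_path_def
    by (intro conjI ballI is_interval_oo nontrivial bexI[OF _ chart]) (simp only: prod.case local_chart)
qed

lemma exists_nonconstant_fdc_path:
  assumes M: "lorentzian_manifold A G Tf"
  shows "\<exists>I \<mu> a b. open I \<and> fdc_path A G Tf I \<mu> \<and> a \<in> I \<and> b \<in> I \<and> \<mu> a \<noteq> \<mu> b"
proof -
  fix x0
  have atlas: "smooth_atlas A"
    using M unfolding lorentzian_manifold_def by simp
  then have "x0 \<in> (\<Union>c\<in>A. fst c)"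
    unfolding smooth_atlas_def by simp
  then obtain U \<phi> where chart: "(U, \<phi>) \<in> A" and "x0 \<in> U"
    by auto
  define \<psi> where "\<psi> = inv_into U \<phi>"
  define p where "p = \<phi> x0"
  define v where "v = Tf \<phi> x0"
  have open_chart: "open (\<phi> ` U)"
    using atlas chart unfolding smooth_atlas_def by auto
  have "\<psi> p = x0"
    using \<open>x0 \<in> U\<close> atlas chart unfolding smooth_atlas_def homeomorphism_def \<psi>_def p_def by blast
  have "smooth_on (\<phi> ` U) (\<lambda>y. G \<phi> (\<psi> y))" and orientation: "continuous_on (\<phi> ` U) (\<lambda>y. Tf \<phi> (\<psi> y))"
    and timelike_field: "\<forall>x\<in>U. bil (G \<phi> x) (Tf \<phi> x) (Tf \<phi> x) < 0"
    using M chart unfolding lorentzian_manifold_def \<psi>_def by auto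
  then have metric: "continuous_on (\<phi> ` U) (\<lambda>y. G \<phi> (\<psi> y))"
    unfolding smooth_on_def by (metis Ck.simps(1))
  have timelike: "bil (G \<phi> x0) v v < 0"
    using timelike_field \<open>x0 \<in> U\<close> by (simp add: v_def)
  then have "v \<noteq> 0"
    by (auto simp: bil_def)
  define F where "F y = max (bil (G \<phi> (\<psi> y)) v v) (bil (G \<phi> (\<psi> y)) v (Tf \<phi> (\<psi> y)))" for y
  have "continuous_on (\<phi> ` U) F"
    unfolding F_def by (intro continuous_intros metric orientation)
  then have "open (\<phi> ` U \<inter> F -` {..<0})"
    using continuous_open_preimage open_chart open_lessThan by blast
  moreover have "p \<in> \<phi> ` U \<inter> F -` {..<0}"
    using \<open>x0 \<in> U\<close> \<open>\<psi> p = x0\<close> timelike timelike_field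
    unfolding F_def p_def v_def by auto
  ultimately obtain r where "r > 0" and ball: "ball p r \<subseteq> \<phi> ` U \<inter> F -` {..<0}"
    using openE by blast
  define e where "e = r / norm v"
  have "e > 0"
    using \<open>r > 0\<close> \<open>v \<noteq> 0\<close> by (simp add: e_def)
  have on_line: "p + t *\<^sub>R v \<in> \<phi> ` U \<inter> F -` {..<0}" if "t \<in> {-e<..<e}" for t
  proof -
    have "\<bar>t\<bar> < e"
      using that by auto
    then have "\<bar>t\<bar> * norm v < r"
      using \<open>v \<noteq> 0\<close> by (simp add: e_def pos_less_divide_eq)
    then have "p + t *\<^sub>R v \<in> ball p r"
      by (simp add: dist_norm)
    then show ?thesis
      using ball by blast
  qed
  then have on_chart: "p + t *\<^sub>R v \<in> \<phi> ` U"
    and causal: "bil (G \<phi> (\<psi> (p + t *\<^sub>R v))) v v \<le> 0 \<and>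
      bil (G \<phi> (\<psi> (p + t *\<^sub>R v))) v (Tf \<phi> (\<psi> (p + t *\<^sub>R v))) < 0"
    if "t \<in> {-e<..<e}" for t
    using on_line[OF that] by (simp_all add: F_def)
  have path: "fdc_path A G Tf {-e<..<e} (\<lambda>t. \<psi> (p + t *\<^sub>R v))"
    by (rule fdc_path_coordinate_line[OF chart _ \<open>v \<noteq> 0\<close>, folded \<psi>_def])
       (use \<open>e > 0\<close> on_chart causal in auto)
  have "\<psi> (p + 0 *\<^sub>R v) \<noteq> \<psi> (p + (e/2) *\<^sub>R v)"
    using on_line[of 0] on_line[of "e/2"] \<open>e > 0\<close> \<open>v \<noteq> 0\<close>
    by (auto simp: \<psi>_def dest!: arg_cong[where f = \<phi>] simp: f_inv_into_f)
  then show ?thesis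
    using path \<open>e > 0\<close>
    by (intro exI[of _ "{-e<..<e}"] exI[of _ "\<lambda>t. \<psi> (p + t *\<^sub>R v)"] exI[of _ 0] exI[of _ "e/2"]) auto
qed

lemma reparam_refl: "is_interval I \<Longrightarrow> open I \<Longrightarrow> reparam I \<mu> I \<mu>"
  unfolding reparam_def
  by (intro conjI exI[of _ id] smooth_on_affine[of _ _ 0 1])
     (auto intro!: exI[of _ 1] derivative_eq_intros simp: id_def bij_betw_def)

lemma curve_of_open_path_in_cId:
  assumes "fdc_path A G Tf I \<mu>" "open I" "t \<in> I"
  shows "{(K, \<nu>). reparam I \<mu> K \<nu>} \<in> cId A G Tf {\<mu> t}"
proof -
  have "reparam I \<mu> I \<mu>"
    using assms reparam_refl unfolding fdc_path_def by blast
  then show ?thesis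
    using assms unfolding cId_def curves_through_def fdc_curves_def
    by (intro CollectI conjI bexI[of _ "(I, \<mu>)"]) auto
qed

lemma exists_curve_through_two_points:
  assumes "lorentzian_manifold A G Tf"
  shows "\<exists>c x y. x \<noteq> y \<and> c \<in> cId A G Tf {x} \<and> c \<in> cId A G Tf {y}"
  using exists_nonconstant_fdc_path[OF assms] curve_of_open_path_in_cId by metis

lemma cId_empty: "cId A G Tf {} = {}"
  unfolding cId_def curves_through_def by auto

lemma is_slice_singleton:
  fixes A :: "('p::t1_space, 'n::finite) chart set"
  shows "is_slice A G Tf {x}"
  unfolding is_slice_def spacelike_def by simp

lemma not_monoidal_intersection:
  assumes "lorentzian_manifold A G Tf" and singletons: "\<And>x. {x} \<in> Ob"
  shows "\<not> (\<exists>I a l r. monoidal_category Ob (cHom A G Tf) cComp (cId A G Tf)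
                         (\<lambda>X Y. X \<inter> Y) (\<lambda>S T. S \<inter> T) I a l r)"
proof
  assume "\<exists>I a l r. monoidal_category Ob (cHom A G Tf) cComp (cId A G Tf)
                         (\<lambda>X Y. X \<inter> Y) (\<lambda>S T. S \<inter> T) I a l r"
  then obtain I a l r where "monoidal_category Ob (cHom A G Tf) cComp (cId A G Tf)
                         (\<lambda>X Y. X \<inter> Y) (\<lambda>S T. S \<inter> T) I a l r"
    by blast
  note tensor_ident = monoidal_category_tensor_ident[OF this singletons singletons]
  obtain c x y where "x \<noteq> y" "c \<in> cId A G Tf {x}" "c \<in> cId A G Tf {y}"
    using exists_curve_through_two_points[OF assms(1)] by blast
  then have "c \<in> cId A G Tf ({x} \<inter> {y})"
    using tensor_ident by blast
  then show False
    using \<open>x \<noteq> y\<close> by (simp add: cId_empty)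
qed

theorem mainTheorem4:
  fixes A :: "('p::{t2_space, second_countable_topology}, 'n::finite) chart set"
    and G :: "('p \<Rightarrow> real^'n) \<Rightarrow> 'p \<Rightarrow> real^'n^'n"
    and Tf :: "('p \<Rightarrow> real^'n) \<Rightarrow> 'p \<Rightarrow> real^'n"
  assumes "lorentzian_manifold A G Tf"
  shows "\<not> (\<exists>I a l r. monoidal_category (slice_objects A G Tf) (cHom A G Tf) cComp (cId A G Tf)
                         (\<lambda>X Y. X \<inter> Y) (\<lambda>S T. S \<inter> T) I a l r)
       \<and> \<not> (\<exists>I a l r. monoidal_category UNIV (cHom A G Tf) cComp (cId A G Tf)
                         (\<lambda>X Y. X \<inter> Y) (\<lambda>S T. S \<inter> T) I a l r)"
  using not_monoidal_intersection[OF assms, of "slice_objects A G Tf"]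
    not_monoidal_intersection[OF assms, of UNIV]
  by (simp add: slice_objects_def is_slice_singleton)

end
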